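(* Let $G$ and $F$ be two nilpotent Chernikov $p$-groups, each with top $H_m$ and bottom $M^{(n)}$, and let $t,f:H_m\times H_m\to M_p^{(n)}$ be their associated commutator functions. Then $G\cong F$ if and only if there exist an automorphism $\sigma$ of $M^{(n)}$ and an automorphism $\theta$ of $H_m$ such that $f(\theta(x),\theta(y))=\sigma(t(x,y))$ for all $x,y\in H_m$.
   Context: Groups are written additively; $[u,v]=u+v-u-v$. A Chernikov $p$-group $G$ is an extension of a finite direct sum $M$ of quasi-cyclic $p$-groups (its bottom; it is the largest divisible abelian subgroup of $G$) by a finite $p$-group $H=G/M$ (its top). $M^{(n)}$ denotes the direct sum of $n$ quasi-cyclic $p$-groups, $M_p^{(n)}=\{a\in M^{(n)}:pa=0\}$, and $H_m$ is the elementary abelian $p$-group of rank $m$. For a nilpotent Chernikov $p$-group $G$ with bottom $M^{(n)}$ and top $H_m$ (so $H_m$ acts trivially on $M^{(n)}$), its commutator function is $t(x,y)=[\bar x,\bar y]$, where $\bar x,\bar y\in G$ are any preimages of $x,y\in H_m$; it is well defined and is a skew-symmetric bilinear map $H_m\times H_m\to M_p^{(n)}$. *)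

theory Defs
  imports "HOL-Algebra.Algebra"
begin

text \<open>The quasi-cyclic (Pruefer) p-group, realised as the rationals in [0,1) whose
  denominator is a power of p, under addition modulo 1.\<close>
definition prufer_group :: "nat \<Rightarrow> rat monoid" where
  "prufer_group p = \<lparr>carrier = {q::rat. 0 \<le> q \<and> q < 1 \<and> (\<exists>k::nat. q * of_nat p ^ k \<in> \<int>)},
                     monoid.mult = (\<lambda>a b. frac (a + b)),
                     one = 0\<rparr>"

definition Mn :: "nat \<Rightarrow> nat \<Rightarrow> (nat \<Rightarrow> rat) monoid" where
  "Mn p n = product_group {..<n} (\<lambda>_. prufer_group p)"

definition Hm :: "nat \<Rightarrow> nat \<Rightarrow> (nat \<Rightarrow> int) monoid" where
  "Hm p m = product_group {..<m} (\<lambda>_. integer_mod_group p)"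

definition commutator_set :: "('a, 'b) monoid_scheme \<Rightarrow> 'a set \<Rightarrow> 'a set \<Rightarrow> 'a set" where
  "commutator_set G H K =
     (\<Union>h\<in>H. \<Union>k\<in>K. {h \<otimes>\<^bsub>G\<^esub> k \<otimes>\<^bsub>G\<^esub> inv\<^bsub>G\<^esub> h \<otimes>\<^bsub>G\<^esub> inv\<^bsub>G\<^esub> k})"

fun lower_central :: "('a, 'b) monoid_scheme \<Rightarrow> nat \<Rightarrow> 'a set" where
  "lower_central G 0 = carrier G"
| "lower_central G (Suc i) = generate G (commutator_set G (lower_central G i) (carrier G))"

definition nilpotent_group :: "('a, 'b) monoid_scheme \<Rightarrow> bool" where
  "nilpotent_group G \<longleftrightarrow> group G \<and> (\<exists>c. lower_central G c = {\<one>\<^bsub>G\<^esub>})"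

definition divisible_abelian_subgroup :: "('a, 'b) monoid_scheme \<Rightarrow> 'a set \<Rightarrow> bool" where
  "divisible_abelian_subgroup G K \<longleftrightarrow>
     subgroup K G \<and> (\<forall>a\<in>K. \<forall>b\<in>K. a \<otimes>\<^bsub>G\<^esub> b = b \<otimes>\<^bsub>G\<^esub> a) \<and>
     (\<forall>x\<in>K. \<forall>k::nat. k > 0 \<longrightarrow> (\<exists>y\<in>K. y [^]\<^bsub>G\<^esub> k = x))"

definition is_bottom :: "('a, 'b) monoid_scheme \<Rightarrow> 'a set \<Rightarrow> bool" where
  "is_bottom G N \<longleftrightarrow> divisible_abelian_subgroup G N \<and>
     (\<forall>K. divisible_abelian_subgroup G K \<longrightarrow> K \<subseteq> N)"

definition nilpotent_chernikov :: "('a, 'b) monoid_scheme \<Rightarrow> nat \<Rightarrow> nat \<Rightarrow> nat \<Rightarrow>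
    'a set \<Rightarrow> ('a \<Rightarrow> nat \<Rightarrow> rat) \<Rightarrow> ('a set \<Rightarrow> nat \<Rightarrow> int) \<Rightarrow> bool" where
  "nilpotent_chernikov G p n m N \<phi> \<psi> \<longleftrightarrow>
     nilpotent_group G \<and> N \<lhd> G \<and> is_bottom G N \<and>
     \<phi> \<in> iso (G\<lparr>carrier := N\<rparr>) (Mn p n) \<and>
     \<psi> \<in> iso (G Mod N) (Hm p m)"

definition lift :: "('a, 'b) monoid_scheme \<Rightarrow> 'a set \<Rightarrow> ('a set \<Rightarrow> nat \<Rightarrow> int) \<Rightarrow>
    (nat \<Rightarrow> int) \<Rightarrow> 'a" where
  "lift G N \<psi> x = (SOME g. g \<in> carrier G \<and> \<psi> (N #>\<^bsub>G\<^esub> g) = x)"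

text \<open>t(x,y) = [xbar, ybar] = xbar + ybar - xbar - ybar (written multiplicatively),
  transported to M^(n) via phi.\<close>
definition commutator_function :: "('a, 'b) monoid_scheme \<Rightarrow> 'a set \<Rightarrow> ('a \<Rightarrow> nat \<Rightarrow> rat) \<Rightarrow>
    ('a set \<Rightarrow> nat \<Rightarrow> int) \<Rightarrow> (nat \<Rightarrow> int) \<Rightarrow> (nat \<Rightarrow> int) \<Rightarrow> (nat \<Rightarrow> rat)" where
  "commutator_function G N \<phi> \<psi> x y =
     (let u = lift G N \<psi> x; v = lift G N \<psi> y
      in \<phi> (u \<otimes>\<^bsub>G\<^esub> v \<otimes>\<^bsub>G\<^esub> inv\<^bsub>G\<^esub> u \<otimes>\<^bsub>G\<^esub> inv\<^bsub>G\<^esub> v))"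

end

theory Submission
  imports Defs
begin

(*
  The whole argument rests on one structural fact: the bottom N of such a group G is
  central.  For g in G the map x |-> [x,g] is an endomorphism of N whose iterates vanish
  eventually (nilpotency); since N is divisible and g^p lies in N, vanishing of the
  (i+2)-nd iterate forces vanishing of the (i+1)-st, hence of the first.  Consequently
  commutators depend only on cosets modulo N (so the commutator function is [u,v] for ANY
  lifts u, v), and every coset contains an element of order dividing p.

  Forward direction: an isomorphism G -> F maps the largest divisible abelian subgroup onto
  the largest one, hence induces sigma on M^(n) and theta on H_m that transport commutators.
  Backward direction: sigma gives an isomorphism tau of the bottoms, and an isomorphism
  G -> F is grown as a relation T between G and F ("partial isomorphism": closed under
  products and inverses, containing the graph of tau, compatible with theta on the tops).
  A partial isomorphism whose image in H_m misses some x is enlarged by adjoining lifts of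
  x and theta x of order p; as H_m is finite, a maximal one covers H_m and is the graph of
  an isomorphism.
*)

section \<open>The elementary abelian group H_m\<close>

lemma Hm_group: "group (Hm p m)"
  unfolding Hm_def by (rule product_group) simp

lemma Hm_comm:
  assumes "x \<in> carrier (Hm p m)" "y \<in> carrier (Hm p m)"
  shows "x \<otimes>\<^bsub>Hm p m\<^esub> y = y \<otimes>\<^bsub>Hm p m\<^esub> x"
  unfolding Hm_def by (auto simp: add.commute)

lemma Hm_pow:
  assumes "p > 0" "x \<in> carrier (Hm p m)"
  shows "x [^]\<^bsub>Hm p m\<^esub> (k::nat) = (\<lambda>i\<in>{..<m}. (int k * x i) mod int p)"
proof (induction k)
  case 0 then show ?case using assms by (simp add: Hm_def integer_mod_group_def)
next
  case (Suc k)
  have "x [^]\<^bsub>Hm p m\<^esub> Suc k = x [^]\<^bsub>Hm p m\<^esub> k \<otimes>\<^bsub>Hm p m\<^esub> x" by simp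
  also have "\<dots> = (\<lambda>i\<in>{..<m}. (int (Suc k) * x i) mod int p)"
    unfolding Suc
  proof (rule ext)
    fix i
    show "((\<lambda>i\<in>{..<m}. (int k * x i) mod int p) \<otimes>\<^bsub>Hm p m\<^esub> x) i
          = (\<lambda>i\<in>{..<m}. (int (Suc k) * x i) mod int p) i"
      using assms by (simp add: Hm_def integer_mod_group_def mod_add_right_eq algebra_simps)
  qed
  finally show ?case .
qed

lemma Hm_pow_p:
  assumes "p > 0" "x \<in> carrier (Hm p m)"
  shows "x [^]\<^bsub>Hm p m\<^esub> p = \<one>\<^bsub>Hm p m\<^esub>"
  using assms by (simp add: Hm_pow) (simp add: Hm_def integer_mod_group_def)

lemma Hm_finite: "p > 0 \<Longrightarrow> finite (carrier (Hm p m))"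
  unfolding Hm_def by (auto intro!: finite_PiE simp: carrier_integer_mod_group)

definition commutator :: "('a, 'b) monoid_scheme \<Rightarrow> 'a \<Rightarrow> 'a \<Rightarrow> 'a" where
  "commutator G a b = a \<otimes>\<^bsub>G\<^esub> b \<otimes>\<^bsub>G\<^esub> inv\<^bsub>G\<^esub> a \<otimes>\<^bsub>G\<^esub> inv\<^bsub>G\<^esub> b"

context group begin

lemma inv_mult_cancel_left [simp]:
  "x \<in> carrier G \<Longrightarrow> y \<in> carrier G \<Longrightarrow> inv x \<otimes> (x \<otimes> y) = y"
  by (simp add: m_assoc[symmetric])

lemma mult_inv_cancel_left [simp]:
  "x \<in> carrier G \<Longrightarrow> y \<in> carrier G \<Longrightarrow> x \<otimes> (inv x \<otimes> y) = y"
  by (simp add: m_assoc[symmetric])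

lemma commutator_eq_one_iff:
  "a \<in> carrier G \<Longrightarrow> b \<in> carrier G \<Longrightarrow> commutator G a b = \<one> \<longleftrightarrow> a \<otimes> b = b \<otimes> a"
  using inv_solve_right'[of "\<one>" "a \<otimes> b \<otimes> inv a" b] inv_solve_right'[of b "a \<otimes> b" a]
  by (simp add: commutator_def)

lemma commutator_swap:
  "x \<in> carrier G \<Longrightarrow> y \<in> carrier G \<Longrightarrow> x \<otimes> y = commutator G x y \<otimes> y \<otimes> x"
  unfolding commutator_def by (simp add: m_assoc)

lemma inv_pow_of_order_p:
  assumes x: "x \<in> carrier G" and xp: "x [^] p = \<one>" and p: "p > 0"
  shows "inv (x [^] (k::nat)) = x [^] (k * (p - 1))"
proof -
  have "x [^] (k * (p - 1)) \<otimes> x [^] k = x [^] (k * p)"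
    using x p by (simp add: nat_pow_mult algebra_simps)
  also have "\<dots> = (x [^] p) [^] k" using x by (simp add: nat_pow_pow mult.commute)
  also have "\<dots> = \<one>" using xp by simp
  finally show ?thesis using x inv_equality by simp
qed

lemma pow_pow_of_order_p:
  assumes x: "x \<in> carrier G" and xp: "x [^] p = \<one>" and e: "k * a = p * b + (1::nat)"
  shows "(x [^] k) [^] a = x"
proof -
  have "(x [^] k) [^] a = x [^] (p * b + 1)" using x e by (simp add: nat_pow_pow)
  also have "\<dots> = (x [^] p) [^] b \<otimes> x"
    using x by (simp add: nat_pow_pow nat_pow_mult[symmetric])
  finally show ?thesis using xp x by simp
qed

end

lemma prime_not_dvd_bezout:
  fixes p k :: nat
  assumes "Factorial_Ring.prime p" "\<not> p dvd k"
  shows "\<exists>a b. k * a = p * b + 1"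
proof -
  have k: "k \<noteq> 0" using assms(2) by (metis dvd_0_right)
  have "coprime p k" using prime_imp_coprime assms by blast
  then have "gcd k p = 1" by (simp add: coprime_iff_gcd_eq_1 gcd.commute)
  then show ?thesis using bezout_nat[OF k, of p] by simp
qed

section \<open>A nilpotent Chernikov p-group with elementary abelian top\<close>

locale chernikov =
  fixes G (structure) and p n m :: nat and N and \<phi> and \<psi>
  assumes prime_p: "Factorial_Ring.prime p"
    and nc: "nilpotent_chernikov G p n m N \<phi> \<psi>"
begin

lemma is_group: "group G" using nc by (simp add: nilpotent_chernikov_def nilpotent_group_def)

sublocale group G by (rule is_group)

lemma p_pos: "p > 0" using prime_p by (simp add: prime_gt_0_nat)

lemma N_normal: "N \<lhd> G" using nc by (simp add: nilpotent_chernikov_def)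
lemma N_subgroup: "subgroup N G" using N_normal normal_def by blast
lemma N_sub: "N \<subseteq> carrier G" using N_subgroup subgroup.subset by blast
lemma N_bottom: "is_bottom G N" using nc by (simp add: nilpotent_chernikov_def)
lemma N_divisible_abelian: "divisible_abelian_subgroup G N" using N_bottom is_bottom_def by blast
lemma N_comm: "a \<in> N \<Longrightarrow> b \<in> N \<Longrightarrow> a \<otimes> b = b \<otimes> a"
  using N_divisible_abelian by (auto simp: divisible_abelian_subgroup_def)
lemma N_div: "x \<in> N \<Longrightarrow> (k::nat) > 0 \<Longrightarrow> \<exists>y\<in>N. y [^] k = x"
  using N_divisible_abelian by (auto simp: divisible_abelian_subgroup_def)
lemma N_pow: "x \<in> N \<Longrightarrow> x [^] (k::nat) \<in> N"
  by (induction k) (auto intro: subgroup.m_closed[OF N_subgroup] subgroup.one_closed[OF N_subgroup])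
lemma phi_iso: "\<phi> \<in> iso (G\<lparr>carrier := N\<rparr>) (Mn p n)" using nc by (simp add: nilpotent_chernikov_def)
lemma phi_bij: "bij_betw \<phi> N (carrier (Mn p n))" using phi_iso by (simp add: iso_def)
lemma psi_iso: "\<psi> \<in> iso (G Mod N) (Hm p m)" using nc by (simp add: nilpotent_chernikov_def)

definition \<pi> where "\<pi> g = \<psi> (N #> g)"

lemma pi_hom: "\<pi> \<in> hom G (Hm p m)"
proof -
  have h: "\<psi> \<in> hom (G Mod N) (Hm p m)" using psi_iso iso_imp_homomorphism by blast
  have c: "N #> a \<in> carrier (G Mod N)" if "a \<in> carrier G" for a
    using that by (auto simp: carrier_FactGroup)
  show ?thesis unfolding hom_def
  proof safe
    fix a assume "a \<in> carrier G" then show "\<pi> a \<in> carrier (Hm p m)"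
      using c h unfolding \<pi>_def hom_def by blast
  next
    fix a b assume a: "a \<in> carrier G" and b: "b \<in> carrier G"
    have "\<pi> (a \<otimes> b) = \<psi> ((N #> a) \<otimes>\<^bsub>G Mod N\<^esub> (N #> b))"
      unfolding \<pi>_def using a b by (simp add: normal.rcos_sum[OF N_normal])
    also have "\<dots> = \<pi> a \<otimes>\<^bsub>Hm p m\<^esub> \<pi> b"
      unfolding \<pi>_def using hom_mult[OF h c[OF a] c[OF b]] by simp
    finally show "\<pi> (a \<otimes> b) = \<pi> a \<otimes>\<^bsub>Hm p m\<^esub> \<pi> b" .
  qed
qed

lemma pi_group_hom: "group_hom G (Hm p m) \<pi>"
  by (simp add: group_hom_def group_hom_axioms_def pi_hom is_group Hm_group)

lemma pi_closed: "g \<in> carrier G \<Longrightarrow> \<pi> g \<in> carrier (Hm p m)"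
  using pi_hom by (auto simp: hom_def)
lemma pi_mult: "a \<in> carrier G \<Longrightarrow> b \<in> carrier G \<Longrightarrow> \<pi> (a \<otimes> b) = \<pi> a \<otimes>\<^bsub>Hm p m\<^esub> \<pi> b"
  by (rule hom_mult[OF pi_hom])
lemma pi_inv: "a \<in> carrier G \<Longrightarrow> \<pi> (inv a) = inv\<^bsub>Hm p m\<^esub> \<pi> a"
  using group_hom.hom_inv[OF pi_group_hom] by blast
lemma pi_one: "\<pi> \<one> = \<one>\<^bsub>Hm p m\<^esub>"
  using group_hom.hom_one[OF pi_group_hom] by blast
lemma pi_pow: "a \<in> carrier G \<Longrightarrow> \<pi> (a [^] (k::nat)) = \<pi> a [^]\<^bsub>Hm p m\<^esub> k"
  using group_hom.hom_nat_pow[OF pi_group_hom] by blast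

lemma pi_surj: "\<pi> ` carrier G = carrier (Hm p m)"
proof -
  have "\<psi> ` carrier (G Mod N) = carrier (Hm p m)" using psi_iso by (simp add: iso_iff)
  then show ?thesis unfolding \<pi>_def carrier_FactGroup by (simp add: image_image)
qed

lemma pi_kernel: "g \<in> carrier G \<Longrightarrow> \<pi> g = \<one>\<^bsub>Hm p m\<^esub> \<longleftrightarrow> g \<in> N"
proof -
  assume g: "g \<in> carrier G"
  have inj: "inj_on \<psi> (carrier (G Mod N))" using psi_iso by (simp add: iso_iff)
  have h: "\<psi> \<in> hom (G Mod N) (Hm p m)" using psi_iso iso_imp_homomorphism by blast
  have Mod_group: "group (G Mod N)" using N_normal normal.factorgroup_is_group by blast
  have one: "\<psi> N = \<one>\<^bsub>Hm p m\<^esub>" using hom_one[OF h Mod_group Hm_group] by simp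
  have c1: "N #> g \<in> carrier (G Mod N)" using g by (auto simp: carrier_FactGroup)
  have c2: "N \<in> carrier (G Mod N)" using monoid.one_closed[OF group.is_monoid[OF Mod_group]] by simp
  have "\<pi> g = \<one>\<^bsub>Hm p m\<^esub> \<longleftrightarrow> N #> g = N"
    unfolding \<pi>_def using inj c1 c2 one inj_on_eq_iff by metis
  also have "\<dots> \<longleftrightarrow> g \<in> N"
    using coset_join1[OF _ g N_subgroup] subgroup.rcos_const[OF N_subgroup is_group] by blast
  finally show ?thesis .
qed

lemma pi_eq_iff: "a \<in> carrier G \<Longrightarrow> b \<in> carrier G \<Longrightarrow> \<pi> a = \<pi> b \<longleftrightarrow> inv a \<otimes> b \<in> N"
proof -
  assume a: "a \<in> carrier G" and b: "b \<in> carrier G"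
  have "\<pi> (inv a \<otimes> b) = inv\<^bsub>Hm p m\<^esub> \<pi> a \<otimes>\<^bsub>Hm p m\<^esub> \<pi> b"
    using a b pi_mult pi_inv by simp
  moreover have "inv\<^bsub>Hm p m\<^esub> \<pi> a \<otimes>\<^bsub>Hm p m\<^esub> \<pi> b = \<one>\<^bsub>Hm p m\<^esub> \<longleftrightarrow> \<pi> a = \<pi> b"
    using group.inv_solve_left'[OF Hm_group monoid.one_closed[OF group.is_monoid[OF Hm_group]]
        pi_closed[OF a] pi_closed[OF b]] pi_closed[OF a]
    by (auto simp: group.is_monoid[OF Hm_group])
  ultimately show ?thesis using pi_kernel[of "inv a \<otimes> b"] a b by auto
qed

lemma pow_p_in_N: "g \<in> carrier G \<Longrightarrow> g [^] p \<in> N"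
  using pi_kernel[of "g [^] p"] pi_pow Hm_pow_p p_pos pi_closed by simp

lemma lift_spec:
  assumes "x \<in> carrier (Hm p m)"
  shows "lift G N \<psi> x \<in> carrier G \<and> \<pi> (lift G N \<psi> x) = x"
proof -
  from assms pi_surj obtain g where g: "g \<in> carrier G" "\<pi> g = x" by (metis imageE)
  hence "\<exists>g. g \<in> carrier G \<and> \<psi> (N #> g) = x" unfolding \<pi>_def by blast
  from someI_ex[OF this] show ?thesis unfolding lift_def \<pi>_def .
qed

subsection \<open>The bottom is central\<close>

definition \<delta> :: "'a \<Rightarrow> 'a \<Rightarrow> 'a" where "\<delta> g x = commutator G x g"

lemma delta_N: "g \<in> carrier G \<Longrightarrow> x \<in> N \<Longrightarrow> \<delta> g x \<in> N"
proof -
  assume g: "g \<in> carrier G" and x: "x \<in> N"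
  have xc: "x \<in> carrier G" using x N_sub by blast
  have "g \<otimes> inv x \<otimes> inv g \<in> N"
    using normal.inv_op_closed2[OF N_normal g] x subgroup.m_inv_closed[OF N_subgroup] by blast
  then have "x \<otimes> (g \<otimes> inv x \<otimes> inv g) \<in> N" using x subgroup.m_closed[OF N_subgroup] by blast
  then show ?thesis unfolding \<delta>_def commutator_def using g xc by (simp add: m_assoc)
qed

lemma delta_mult: "g \<in> carrier G \<Longrightarrow> a \<in> N \<Longrightarrow> b \<in> N \<Longrightarrow> \<delta> g (a \<otimes> b) = \<delta> g a \<otimes> \<delta> g b"
proof -
  assume g: "g \<in> carrier G" and a: "a \<in> N" and b: "b \<in> N"
  have ac: "a \<in> carrier G" and bc: "b \<in> carrier G" using a b N_sub by auto
  have cN: "g \<otimes> inv a \<otimes> inv g \<in> N"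
    using normal.inv_op_closed2[OF N_normal g] a subgroup.m_inv_closed[OF N_subgroup] by blast
  have "\<delta> g (a \<otimes> b) = a \<otimes> \<delta> g b \<otimes> (g \<otimes> inv a \<otimes> inv g)"
    unfolding \<delta>_def commutator_def using g ac bc by (simp add: m_assoc inv_mult_group)
  also have "\<dots> = \<delta> g b \<otimes> (a \<otimes> (g \<otimes> inv a \<otimes> inv g))"
    using N_comm[OF a delta_N[OF g b]] g ac bc delta_N[OF g b] N_sub
    by (metis cN m_assoc subsetD)
  also have "a \<otimes> (g \<otimes> inv a \<otimes> inv g) = \<delta> g a"
    unfolding \<delta>_def commutator_def using g ac by (simp add: m_assoc)
  finally show ?thesis using N_comm delta_N a b g by metis
qed

lemma delta_pow: "g \<in> carrier G \<Longrightarrow> x \<in> N \<Longrightarrow> \<delta> g (x [^] (k::nat)) = \<delta> g x [^] k"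
proof (induction k)
  case 0 then show ?case by (simp add: \<delta>_def commutator_def)
next
  case (Suc k) then show ?case using N_pow by (simp add: delta_mult)
qed

lemma delta_iter_N: "g \<in> carrier G \<Longrightarrow> x \<in> N \<Longrightarrow> (\<delta> g ^^ j) x \<in> N"
  by (induction j) (auto simp: delta_N)

lemma delta_iter_pow:
  "g \<in> carrier G \<Longrightarrow> x \<in> N \<Longrightarrow> (\<delta> g ^^ j) (x [^] (k::nat)) = ((\<delta> g ^^ j) x) [^] k"
  by (induction j) (auto simp: delta_pow delta_iter_N)

text \<open>The j-th iterate lands in the j-th term of the lower central series, so by
  nilpotency some iterate vanishes on N.\<close>
lemma delta_iter_lower_central: "g \<in> carrier G \<Longrightarrow> x \<in> N \<Longrightarrow> (\<delta> g ^^ j) x \<in> lower_central G j"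
proof (induction j)
  case 0 then show ?case using N_sub by auto
next
  case (Suc j)
  have "(\<delta> g ^^ Suc j) x \<in> commutator_set G (lower_central G j) (carrier G)"
    using Suc unfolding commutator_set_def \<delta>_def commutator_def by auto
  then show ?case by (simp add: generate.incl)
qed

lemma delta_nilpotent: "g \<in> carrier G \<Longrightarrow> \<exists>c. \<forall>x\<in>N. (\<delta> g ^^ c) x = \<one>"
proof -
  assume g: "g \<in> carrier G"
  obtain c where "lower_central G c = {\<one>}"
    using nc unfolding nilpotent_chernikov_def nilpotent_group_def by blast
  then show ?thesis using delta_iter_lower_central[OF g] by blast
qed

text \<open>A commutator e = [k,g] with k in N that commutes with g has order dividing p:
  conjugating k^{-1} by powers of g gives g^j k^{-1} = k^{-1} e^j g^j, and g^p lies in the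
  abelian group N.\<close>
lemma commutator_pow_p:
  assumes g: "g \<in> carrier G" and k: "k \<in> N" and eg: "\<delta> g k \<otimes> g = g \<otimes> \<delta> g k"
  shows "\<delta> g k [^] p = \<one>"
proof -
  define e where "e = \<delta> g k"
  define u where "u = inv k"
  have eN: "e \<in> N" unfolding e_def using delta_N g k by blast
  have uN: "u \<in> N" unfolding u_def using k subgroup.m_inv_closed[OF N_subgroup] by blast
  have kc: "k \<in> carrier G" and ec: "e \<in> carrier G" and uc: "u \<in> carrier G"
    using k eN uN N_sub by auto
  have gu: "g \<otimes> u = u \<otimes> e \<otimes> g"
  proof -
    have "k \<otimes> g \<otimes> inv k \<otimes> inv g = e" by (simp add: e_def \<delta>_def commutator_def)
    then have "k \<otimes> (g \<otimes> u) = e \<otimes> g" unfolding u_def using kc g ec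
      by (metis inv_closed inv_solve_right' m_assoc m_closed)
    then have "g \<otimes> u = inv k \<otimes> (e \<otimes> g)" using kc g uc ec
      by (metis inv_solve_left m_closed)
    then show ?thesis unfolding u_def using kc ec g by (simp add: m_assoc)
  qed
  have gj: "g [^] j \<otimes> u = u \<otimes> e [^] j \<otimes> g [^] j" for j :: nat
  proof (induction j)
    case 0 then show ?case using uc by simp
  next
    case (Suc j)
    have "g [^] Suc j \<otimes> u = g \<otimes> (g [^] j \<otimes> u)"
      using g uc by (subst nat_pow_Suc2) (simp_all add: m_assoc)
    also have "\<dots> = g \<otimes> u \<otimes> e [^] j \<otimes> g [^] j" using Suc g uc ec by (simp add: m_assoc)
    also have "\<dots> = u \<otimes> e \<otimes> (g \<otimes> e [^] j) \<otimes> g [^] j" using gu g uc ec by (simp add: m_assoc)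
    also have "g \<otimes> e [^] j = e [^] j \<otimes> g"
      using group_commutes_pow[OF eg[folded e_def] ec g] by simp
    also have "u \<otimes> e \<otimes> (e [^] j \<otimes> g) \<otimes> g [^] j = u \<otimes> e [^] Suc j \<otimes> g [^] Suc j"
      using g uc ec nat_pow_Suc2[OF g, of j] nat_pow_Suc2[OF ec, of j]
      by (simp only: m_assoc nat_pow_closed m_closed)
    finally show ?case .
  qed
  have "u \<otimes> g [^] p = u \<otimes> e [^] p \<otimes> g [^] p"
    using gj[of p] N_comm[OF pow_p_in_N[OF g] uN] by simp
  then show ?thesis unfolding e_def[symmetric] using uc ec g
    by (metis l_cancel_one' m_closed nat_pow_closed r_cancel)
qed

text \<open>If the (i+2)-nd iterate of delta vanishes on N, so does the (i+1)-st: write x = w^p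
  by divisibility; then the (i+1)-st iterate of w is a commutator fixed by g.\<close>
lemma delta_iter_descend:
  assumes g: "g \<in> carrier G" and vanish: "\<forall>x\<in>N. (\<delta> g ^^ Suc (Suc i)) x = \<one>"
  shows "\<forall>x\<in>N. (\<delta> g ^^ Suc i) x = \<one>"
proof
  fix x assume x: "x \<in> N"
  obtain w where w: "w \<in> N" "w [^] p = x" using N_div[OF x] p_pos by blast
  define k where "k = (\<delta> g ^^ i) w"
  have kN: "k \<in> N" unfolding k_def using delta_iter_N g w by blast
  have eN: "\<delta> g k \<in> N" using delta_N g kN by blast
  have "\<delta> g (\<delta> g k) = \<one>" using vanish w unfolding k_def by simp
  then have "\<delta> g k \<otimes> g = g \<otimes> \<delta> g k"
    using commutator_eq_one_iff eN N_sub g unfolding \<delta>_def by blast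
  then have e_p: "\<delta> g k [^] p = \<one>" using commutator_pow_p[OF g kN] by blast
  have "(\<delta> g ^^ Suc i) x = ((\<delta> g ^^ Suc i) w) [^] p" using delta_iter_pow g w by metis
  then show "(\<delta> g ^^ Suc i) x = \<one>" using e_p unfolding k_def by simp
qed

theorem N_central: "x \<in> N \<Longrightarrow> g \<in> carrier G \<Longrightarrow> x \<otimes> g = g \<otimes> x"
proof -
  assume x: "x \<in> N" and g: "g \<in> carrier G"
  obtain c where "\<forall>x\<in>N. (\<delta> g ^^ c) x = \<one>" using delta_nilpotent g by blast
  then have c: "\<forall>x\<in>N. (\<delta> g ^^ Suc c) x = \<one>" using g by (simp add: \<delta>_def commutator_def)
  have "\<forall>x\<in>N. (\<delta> g ^^ Suc d) x = \<one> \<Longrightarrow> \<forall>x\<in>N. (\<delta> g ^^ Suc 0) x = \<one>" for d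
    by (induction d) (use delta_iter_descend g in blast)+
  from this[OF c] x have "\<delta> g x = \<one>" by simp
  then show ?thesis using commutator_eq_one_iff x g N_sub unfolding \<delta>_def by blast
qed

lemma commutator_in_N: "a \<in> carrier G \<Longrightarrow> b \<in> carrier G \<Longrightarrow> commutator G a b \<in> N"
proof -
  assume a: "a \<in> carrier G" and b: "b \<in> carrier G"
  have "\<pi> (commutator G a b) = commutator (Hm p m) (\<pi> a) (\<pi> b)"
    unfolding commutator_def using a b by (simp add: pi_mult pi_inv)
  also have "\<dots> = \<one>\<^bsub>Hm p m\<^esub>"
    using group.commutator_eq_one_iff[OF Hm_group] Hm_comm pi_closed a b by blast
  finally show ?thesis using pi_kernel a b unfolding commutator_def by simp
qed

lemma commutator_mult_central_left:
  "a \<in> carrier G \<Longrightarrow> b \<in> carrier G \<Longrightarrow> x \<in> N \<Longrightarrow> commutator G (a \<otimes> x) b = commutator G a b"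
proof -
  assume a: "a \<in> carrier G" and b: "b \<in> carrier G" and x: "x \<in> N"
  have xc: "x \<in> carrier G" using x N_sub by blast
  have "commutator G (a \<otimes> x) b = a \<otimes> (x \<otimes> b) \<otimes> inv x \<otimes> inv a \<otimes> inv b"
    unfolding commutator_def using a b xc by (simp add: m_assoc inv_mult_group)
  also have "\<dots> = a \<otimes> (b \<otimes> x) \<otimes> inv x \<otimes> inv a \<otimes> inv b" using N_central[OF x b] by simp
  also have "\<dots> = commutator G a b" unfolding commutator_def using a b xc by (simp add: m_assoc)
  finally show ?thesis .
qed

lemma commutator_mult_central_right:
  "a \<in> carrier G \<Longrightarrow> b \<in> carrier G \<Longrightarrow> y \<in> N \<Longrightarrow> commutator G a (b \<otimes> y) = commutator G a b"
proof -
  assume a: "a \<in> carrier G" and b: "b \<in> carrier G" and y: "y \<in> N"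
  have yc: "y \<in> carrier G" using y N_sub by blast
  have "commutator G a (b \<otimes> y) = a \<otimes> b \<otimes> (y \<otimes> inv a) \<otimes> inv y \<otimes> inv b"
    unfolding commutator_def using a b yc by (simp add: m_assoc inv_mult_group)
  also have "\<dots> = a \<otimes> b \<otimes> (inv a \<otimes> y) \<otimes> inv y \<otimes> inv b" using N_central[OF y inv_closed[OF a]] by simp
  also have "\<dots> = commutator G a b" unfolding commutator_def using a b yc by (simp add: m_assoc)
  finally show ?thesis .
qed

lemma commutator_respects_pi:
  assumes "a \<in> carrier G" "b \<in> carrier G" "a' \<in> carrier G" "b' \<in> carrier G"
    and "\<pi> a = \<pi> a'" "\<pi> b = \<pi> b'"
  shows "commutator G a b = commutator G a' b'"
proof -
  have x: "inv a \<otimes> a' \<in> N" and y: "inv b \<otimes> b' \<in> N" using assms pi_eq_iff by auto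
  have "a' = a \<otimes> (inv a \<otimes> a')" "b' = b \<otimes> (inv b \<otimes> b')" using assms by simp_all
  then have "commutator G a' b' = commutator G (a \<otimes> (inv a \<otimes> a')) (b \<otimes> (inv b \<otimes> b'))" by simp
  also have "\<dots> = commutator G a b"
    using commutator_mult_central_left commutator_mult_central_right x y assms N_sub
    by (metis m_closed subsetD inv_closed)
  finally show ?thesis by simp
qed

lemma commutator_function_eq:
  assumes "a \<in> carrier G" "b \<in> carrier G"
  shows "commutator_function G N \<phi> \<psi> (\<pi> a) (\<pi> b) = \<phi> (commutator G a b)"
proof -
  have "lift G N \<psi> (\<pi> a) \<in> carrier G \<and> \<pi> (lift G N \<psi> (\<pi> a)) = \<pi> a"
       "lift G N \<psi> (\<pi> b) \<in> carrier G \<and> \<pi> (lift G N \<psi> (\<pi> b)) = \<pi> b"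
    using lift_spec pi_closed assms by auto
  then show ?thesis unfolding commutator_function_def Let_def commutator_def[symmetric]
    using commutator_respects_pi assms by metis
qed

text \<open>Every coset of N contains an element of order dividing p: divide g^p inside N.\<close>
lemma lift_of_order_p:
  assumes g0: "g0 \<in> carrier G"
  shows "\<exists>g\<in>carrier G. \<pi> g = \<pi> g0 \<and> g [^] p = \<one>"
proof -
  obtain y where y: "y \<in> N" "y [^] p = g0 [^] p" using N_div pow_p_in_N[OF g0] p_pos by blast
  have yc: "y \<in> carrier G" using y N_sub by blast
  have iyN: "inv y \<in> N" using y subgroup.m_inv_closed[OF N_subgroup] by blast
  have "\<pi> (g0 \<otimes> inv y) = \<pi> g0"
    using pi_eq_iff[of g0 "g0 \<otimes> inv y"] g0 yc iyN by (simp add: m_assoc[symmetric])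
  moreover have "(g0 \<otimes> inv y) [^] p = \<one>"
  proof -
    have "(g0 \<otimes> inv y) [^] p = g0 [^] p \<otimes> inv y [^] p"
      using pow_mult_distrib[of g0 "inv y" p] N_central[OF iyN g0] g0 yc by simp
    also have "\<dots> = g0 [^] p \<otimes> inv (g0 [^] p)" using y yc by (simp add: nat_pow_inv)
    finally show ?thesis using g0 by simp
  qed
  ultimately show ?thesis using g0 yc by blast
qed

end

definition equivalent_commutator_functions ::
    "nat \<Rightarrow> nat \<Rightarrow> nat \<Rightarrow> ('a, 'b) monoid_scheme \<Rightarrow> 'a set \<Rightarrow> ('a \<Rightarrow> nat \<Rightarrow> rat) \<Rightarrow> ('a set \<Rightarrow> nat \<Rightarrow> int)
     \<Rightarrow> ('c, 'd) monoid_scheme \<Rightarrow> 'c set \<Rightarrow> ('c \<Rightarrow> nat \<Rightarrow> rat) \<Rightarrow> ('c set \<Rightarrow> nat \<Rightarrow> int) \<Rightarrow> bool" where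
  "equivalent_commutator_functions p n m G NG \<phi>G \<psi>G F NF \<phi>F \<psi>F \<longleftrightarrow>
    (\<exists>\<sigma> \<theta>. \<sigma> \<in> iso (Mn p n) (Mn p n) \<and> \<theta> \<in> iso (Hm p m) (Hm p m) \<and>
       (\<forall>x\<in>carrier (Hm p m). \<forall>y\<in>carrier (Hm p m).
          commutator_function F NF \<phi>F \<psi>F (\<theta> x) (\<theta> y) =
          \<sigma> (commutator_function G NG \<phi>G \<psi>G x y)))"

section \<open>Isomorphic groups have equivalent commutator functions\<close>

text \<open>Homomorphic images of divisible abelian subgroups are divisible abelian; hence an
  isomorphism maps the bottom onto the bottom.\<close>
lemma divisible_abelian_image:
  assumes hom: "group_hom G F \<Phi>" and K: "divisible_abelian_subgroup G K"
  shows "divisible_abelian_subgroup F (\<Phi> ` K)"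
proof -
  have sK: "subgroup K G" using K divisible_abelian_subgroup_def by blast
  have Kc: "K \<subseteq> carrier G" using subgroup.subset[OF sK] .
  have hm: "\<Phi> (a \<otimes>\<^bsub>G\<^esub> b) = \<Phi> a \<otimes>\<^bsub>F\<^esub> \<Phi> b" if "a \<in> carrier G" "b \<in> carrier G" for a b
    using group_hom.hom_mult[OF hom] that by blast
  show ?thesis unfolding divisible_abelian_subgroup_def
  proof (intro conjI ballI allI impI)
    show "subgroup (\<Phi> ` K) F" using group_hom.subgroup_img_is_subgroup[OF hom sK] .
  next
    fix a b assume "a \<in> \<Phi> ` K" "b \<in> \<Phi> ` K"
    then obtain a0 b0 where "a0 \<in> K" "b0 \<in> K" "a = \<Phi> a0" "b = \<Phi> b0" by blast
    moreover have "a0 \<otimes>\<^bsub>G\<^esub> b0 = b0 \<otimes>\<^bsub>G\<^esub> a0"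
      using K calculation unfolding divisible_abelian_subgroup_def by blast
    ultimately show "a \<otimes>\<^bsub>F\<^esub> b = b \<otimes>\<^bsub>F\<^esub> a" using hm Kc by (metis subsetD)
  next
    fix x and k :: nat assume "x \<in> \<Phi> ` K" "0 < k"
    then obtain x0 where x0: "x0 \<in> K" "x = \<Phi> x0" by blast
    then obtain y where y: "y \<in> K" "y [^]\<^bsub>G\<^esub> k = x0"
      using K \<open>0 < k\<close> unfolding divisible_abelian_subgroup_def by blast
    have "\<Phi> y [^]\<^bsub>F\<^esub> k = x" using group_hom.hom_nat_pow[OF hom, of y k] y x0 Kc by auto
    then show "\<exists>y\<in>\<Phi> ` K. y [^]\<^bsub>F\<^esub> k = x" using y by blast
  qed
qed

locale chernikov_iso = G: chernikov G p n m NG \<phi>G \<psi>G + F: chernikov F p n m NF \<phi>F \<psi>F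
  for G :: "('a, 'b) monoid_scheme" and F :: "('c, 'd) monoid_scheme"
    and p n m NG \<phi>G \<psi>G NF \<phi>F \<psi>F +
  fixes \<Phi>
  assumes Phi_iso: "\<Phi> \<in> iso G F"
begin

abbreviation "H \<equiv> Hm p m"

lemma Phi_group_hom: "group_hom G F \<Phi>"
  using Phi_iso by (simp add: group_hom_def group_hom_axioms_def G.is_group F.is_group iso_imp_homomorphism)
lemma Phi_mult: "a \<in> carrier G \<Longrightarrow> b \<in> carrier G \<Longrightarrow> \<Phi> (a \<otimes>\<^bsub>G\<^esub> b) = \<Phi> a \<otimes>\<^bsub>F\<^esub> \<Phi> b"
  using group_hom.hom_mult[OF Phi_group_hom] by blast
lemma Phi_inv: "a \<in> carrier G \<Longrightarrow> \<Phi> (inv\<^bsub>G\<^esub> a) = inv\<^bsub>F\<^esub> \<Phi> a"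
  using group_hom.hom_inv[OF Phi_group_hom] by blast
lemma Phi_closed: "a \<in> carrier G \<Longrightarrow> \<Phi> a \<in> carrier F"
  using Phi_iso by (auto simp: iso_def hom_def)
lemma Phi_inj: "inj_on \<Phi> (carrier G)" using Phi_iso by (simp add: iso_iff)
lemma Phi_surj: "\<Phi> ` carrier G = carrier F" using Phi_iso by (simp add: iso_iff)

lemma Phi_bottom: "\<Phi> ` NG = NF"
proof
  show "\<Phi> ` NG \<subseteq> NF"
    using divisible_abelian_image[OF Phi_group_hom G.N_divisible_abelian] F.N_bottom
    unfolding is_bottom_def by blast
next
  let ?\<Psi> = "inv_into (carrier G) \<Phi>"
  have "group_hom F G ?\<Psi>"
    using G.iso_set_sym[OF Phi_iso]
    by (simp add: group_hom_def group_hom_axioms_def G.is_group F.is_group iso_imp_homomorphism)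
  then have sub: "?\<Psi> ` NF \<subseteq> NG"
    using divisible_abelian_image[OF _ F.N_divisible_abelian] G.N_bottom
    unfolding is_bottom_def by blast
  show "NF \<subseteq> \<Phi> ` NG"
  proof
    fix h assume h: "h \<in> NF"
    then have "\<Phi> (?\<Psi> h) = h" using F.N_sub Phi_surj f_inv_into_f by (metis subsetD)
    then show "h \<in> \<Phi> ` NG" using sub h by (metis image_subset_iff imageI)
  qed
qed

lemma Phi_bottom_iff: "g \<in> carrier G \<Longrightarrow> \<Phi> g \<in> NF \<longleftrightarrow> g \<in> NG"
proof
  assume g: "g \<in> carrier G" and "\<Phi> g \<in> NF"
  then obtain g' where "g' \<in> NG" "\<Phi> g = \<Phi> g'" using Phi_bottom by (metis imageE)
  then show "g \<in> NG" using Phi_inj g G.N_sub inj_onD by (metis subsetD)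
next
  assume "g \<in> NG" then show "\<Phi> g \<in> NF" using Phi_bottom by blast
qed

definition \<sigma> where "\<sigma> = \<phi>F \<circ> (\<Phi> \<circ> inv_into NG \<phi>G)"

lemma sigma_iso: "\<sigma> \<in> iso (Mn p n) (Mn p n)"
proof -
  have gG: "group (G\<lparr>carrier := NG\<rparr>)" using G.subgroup_imp_group[OF G.N_subgroup] .
  have "inv_into (carrier (G\<lparr>carrier := NG\<rparr>)) \<phi>G \<in> iso (Mn p n) (G\<lparr>carrier := NG\<rparr>)"
    using group.iso_set_sym[OF gG G.phi_iso] .
  then have i: "inv_into NG \<phi>G \<in> iso (Mn p n) (G\<lparr>carrier := NG\<rparr>)" by simp
  have P: "\<Phi> \<in> iso (G\<lparr>carrier := NG\<rparr>) (F\<lparr>carrier := NF\<rparr>)"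
  proof (rule isoI)
    show "\<Phi> \<in> hom (G\<lparr>carrier := NG\<rparr>) (F\<lparr>carrier := NF\<rparr>)"
      unfolding hom_def using Phi_bottom Phi_mult G.N_sub by auto
    show "bij_betw \<Phi> (carrier (G\<lparr>carrier := NG\<rparr>)) (carrier (F\<lparr>carrier := NF\<rparr>))"
      unfolding bij_betw_def using Phi_bottom inj_on_subset[OF Phi_inj G.N_sub] by simp
  qed
  show ?thesis unfolding \<sigma>_def using iso_set_trans[OF iso_set_trans[OF i P] F.phi_iso] .
qed

definition \<theta> where "\<theta> x = F.\<pi> (\<Phi> (lift G NG \<psi>G x))"

lemma pi_Phi_eq_iff:
  "a \<in> carrier G \<Longrightarrow> b \<in> carrier G \<Longrightarrow> F.\<pi> (\<Phi> a) = F.\<pi> (\<Phi> b) \<longleftrightarrow> G.\<pi> a = G.\<pi> b"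
proof -
  assume a: "a \<in> carrier G" and b: "b \<in> carrier G"
  have "F.\<pi> (\<Phi> a) = F.\<pi> (\<Phi> b) \<longleftrightarrow> inv\<^bsub>F\<^esub> \<Phi> a \<otimes>\<^bsub>F\<^esub> \<Phi> b \<in> NF"
    using F.pi_eq_iff Phi_closed a b by blast
  also have "inv\<^bsub>F\<^esub> \<Phi> a \<otimes>\<^bsub>F\<^esub> \<Phi> b = \<Phi> (inv\<^bsub>G\<^esub> a \<otimes>\<^bsub>G\<^esub> b)" using a b Phi_mult Phi_inv by simp
  also have "\<Phi> (inv\<^bsub>G\<^esub> a \<otimes>\<^bsub>G\<^esub> b) \<in> NF \<longleftrightarrow> inv\<^bsub>G\<^esub> a \<otimes>\<^bsub>G\<^esub> b \<in> NG" using Phi_bottom_iff a b by simp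
  also have "\<dots> \<longleftrightarrow> G.\<pi> a = G.\<pi> b" using G.pi_eq_iff a b by simp
  finally show ?thesis .
qed

lemma theta_pi: "g \<in> carrier G \<Longrightarrow> \<theta> (G.\<pi> g) = F.\<pi> (\<Phi> g)"
  unfolding \<theta>_def using pi_Phi_eq_iff G.lift_spec G.pi_closed by metis

lemma theta_iso: "\<theta> \<in> iso H H"
proof -
  have hom: "\<theta> \<in> hom H H"
  proof (rule homI)
    fix x assume "x \<in> carrier H" then show "\<theta> x \<in> carrier H"
      unfolding \<theta>_def using G.lift_spec F.pi_closed Phi_closed by blast
  next
    fix x y assume "x \<in> carrier H" "y \<in> carrier H"
    then obtain a b where ab: "a \<in> carrier G" "b \<in> carrier G" "x = G.\<pi> a" "y = G.\<pi> b"
      using G.pi_surj by (metis imageE)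
    then have "\<theta> (x \<otimes>\<^bsub>H\<^esub> y) = F.\<pi> (\<Phi> (a \<otimes>\<^bsub>G\<^esub> b))"
      using theta_pi[of "a \<otimes>\<^bsub>G\<^esub> b"] G.pi_mult by simp
    also have "\<dots> = \<theta> x \<otimes>\<^bsub>H\<^esub> \<theta> y"
      using ab theta_pi F.pi_mult Phi_mult Phi_closed by simp
    finally show "\<theta> (x \<otimes>\<^bsub>H\<^esub> y) = \<theta> x \<otimes>\<^bsub>H\<^esub> \<theta> y" .
  qed
  have inj: "inj_on \<theta> (carrier H)"
  proof (rule inj_onI)
    fix x y assume "x \<in> carrier H" "y \<in> carrier H" and eq: "\<theta> x = \<theta> y"
    then obtain a b where ab: "a \<in> carrier G" "b \<in> carrier G" "x = G.\<pi> a" "y = G.\<pi> b"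
      using G.pi_surj by (metis imageE)
    then show "x = y" using eq theta_pi pi_Phi_eq_iff by simp
  qed
  have surj: "carrier H \<subseteq> \<theta> ` carrier H"
  proof
    fix y assume "y \<in> carrier H"
    then obtain h where h: "h \<in> carrier F" "F.\<pi> h = y" using F.pi_surj by (metis imageE)
    then obtain g where g: "g \<in> carrier G" "\<Phi> g = h" using Phi_surj by (metis imageE)
    then show "y \<in> \<theta> ` carrier H" using theta_pi h G.pi_closed by (metis imageI)
  qed
  show ?thesis using hom inj surj by (auto simp: iso_iff hom_def)
qed

lemma transports_commutator_function:
  assumes x: "x \<in> carrier H" and y: "y \<in> carrier H"
  shows "commutator_function F NF \<phi>F \<psi>F (\<theta> x) (\<theta> y) = \<sigma> (commutator_function G NG \<phi>G \<psi>G x y)"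
proof -
  obtain a b where ab: "a \<in> carrier G" "b \<in> carrier G" "x = G.\<pi> a" "y = G.\<pi> b"
    using G.pi_surj x y by (metis imageE)
  have cN: "commutator G a b \<in> NG" using G.commutator_in_N ab by blast
  have "commutator_function F NF \<phi>F \<psi>F (\<theta> x) (\<theta> y) = \<phi>F (commutator F (\<Phi> a) (\<Phi> b))"
    using F.commutator_function_eq theta_pi Phi_closed ab by simp
  also have "\<dots> = \<phi>F (\<Phi> (commutator G a b))"
    unfolding commutator_def using ab by (simp add: Phi_mult Phi_inv)
  also have "\<dots> = \<sigma> (\<phi>G (commutator G a b))"
    unfolding \<sigma>_def using inv_into_f_f[OF bij_betw_imp_inj_on[OF G.phi_bij] cN] by simp
  also have "\<dots> = \<sigma> (commutator_function G NG \<phi>G \<psi>G x y)"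
    using G.commutator_function_eq ab by simp
  finally show ?thesis .
qed

end

section \<open>Equivalent commutator functions give isomorphic groups\<close>

locale chernikov_transport = G: chernikov G p n m NG \<phi>G \<psi>G + F: chernikov F p n m NF \<phi>F \<psi>F
  for G :: "('a, 'b) monoid_scheme" and F :: "('c, 'd) monoid_scheme"
    and p n m NG \<phi>G \<psi>G NF \<phi>F \<psi>F +
  fixes \<sigma> \<theta>
  assumes sigma_iso: "\<sigma> \<in> iso (Mn p n) (Mn p n)" and theta_iso: "\<theta> \<in> iso (Hm p m) (Hm p m)"
    and transports: "\<forall>x\<in>carrier (Hm p m). \<forall>y\<in>carrier (Hm p m).
          commutator_function F NF \<phi>F \<psi>F (\<theta> x) (\<theta> y) =
          \<sigma> (commutator_function G NG \<phi>G \<psi>G x y)"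
begin

abbreviation "H \<equiv> Hm p m"

definition \<tau> where "\<tau> = inv_into NF \<phi>F \<circ> (\<sigma> \<circ> \<phi>G)"

lemma tau_iso: "\<tau> \<in> iso (G\<lparr>carrier := NG\<rparr>) (F\<lparr>carrier := NF\<rparr>)"
proof -
  have gF: "group (F\<lparr>carrier := NF\<rparr>)" using F.subgroup_imp_group[OF F.N_subgroup] .
  have "inv_into (carrier (F\<lparr>carrier := NF\<rparr>)) \<phi>F \<in> iso (Mn p n) (F\<lparr>carrier := NF\<rparr>)"
    using group.iso_set_sym[OF gF F.phi_iso] .
  then have i: "inv_into NF \<phi>F \<in> iso (Mn p n) (F\<lparr>carrier := NF\<rparr>)" by simp
  show ?thesis unfolding \<tau>_def using iso_set_trans[OF iso_set_trans[OF G.phi_iso sigma_iso] i] .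
qed

lemma tau_closed: "x \<in> NG \<Longrightarrow> \<tau> x \<in> NF"
  using tau_iso unfolding iso_def hom_def by auto
lemma tau_mult: "x \<in> NG \<Longrightarrow> y \<in> NG \<Longrightarrow> \<tau> (x \<otimes>\<^bsub>G\<^esub> y) = \<tau> x \<otimes>\<^bsub>F\<^esub> \<tau> y"
  using tau_iso unfolding iso_def hom_def by auto
lemma tau_bij: "bij_betw \<tau> NG NF"
  using tau_iso unfolding iso_def by auto

lemma tau_one: "\<tau> \<one>\<^bsub>G\<^esub> = \<one>\<^bsub>F\<^esub>"
proof -
  have o: "\<one>\<^bsub>G\<^esub> \<in> NG" using subgroup.one_closed[OF G.N_subgroup] .
  have c: "\<tau> \<one>\<^bsub>G\<^esub> \<in> carrier F" using tau_closed[OF o] F.N_sub by blast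
  have "\<tau> \<one>\<^bsub>G\<^esub> \<otimes>\<^bsub>F\<^esub> \<tau> \<one>\<^bsub>G\<^esub> = \<tau> \<one>\<^bsub>G\<^esub>" using tau_mult[OF o o] by simp
  then show ?thesis using c by simp
qed

lemma tau_inv: "x \<in> NG \<Longrightarrow> \<tau> (inv\<^bsub>G\<^esub> x) = inv\<^bsub>F\<^esub> \<tau> x"
proof -
  assume x: "x \<in> NG"
  have ix: "inv\<^bsub>G\<^esub> x \<in> NG" using subgroup.m_inv_closed[OF G.N_subgroup x] .
  have xc: "x \<in> carrier G" using x G.N_sub by blast
  have "\<tau> (inv\<^bsub>G\<^esub> x) \<otimes>\<^bsub>F\<^esub> \<tau> x = \<one>\<^bsub>F\<^esub>" using tau_mult[OF ix x] xc tau_one by simp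
  then show ?thesis using tau_closed x ix F.N_sub F.inv_equality by (metis subsetD)
qed

lemma phiF_tau: "x \<in> NG \<Longrightarrow> \<phi>F (\<tau> x) = \<sigma> (\<phi>G x)"
proof -
  assume x: "x \<in> NG"
  have "\<phi>G x \<in> carrier (Mn p n)" using bij_betwE[OF G.phi_bij] x by blast
  then have "\<sigma> (\<phi>G x) \<in> carrier (Mn p n)" using sigma_iso unfolding iso_def hom_def by auto
  then have "\<sigma> (\<phi>G x) \<in> \<phi>F ` NF" using F.phi_bij bij_betw_imp_surj_on by blast
  then show ?thesis unfolding \<tau>_def by (simp add: f_inv_into_f)
qed

lemma theta_hom: "\<theta> \<in> hom H H" using theta_iso iso_imp_homomorphism by blast
lemma theta_closed: "x \<in> carrier H \<Longrightarrow> \<theta> x \<in> carrier H" using theta_hom by (auto simp: hom_def)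
lemma theta_mult: "x \<in> carrier H \<Longrightarrow> y \<in> carrier H \<Longrightarrow> \<theta> (x \<otimes>\<^bsub>H\<^esub> y) = \<theta> x \<otimes>\<^bsub>H\<^esub> \<theta> y"
  by (rule hom_mult[OF theta_hom])
lemma theta_pow: "x \<in> carrier H \<Longrightarrow> \<theta> (x [^]\<^bsub>H\<^esub> (k::nat)) = \<theta> x [^]\<^bsub>H\<^esub> k"
  using hom_nat_pow[OF theta_hom _ Hm_group Hm_group] by blast
lemma theta_one: "\<theta> \<one>\<^bsub>H\<^esub> = \<one>\<^bsub>H\<^esub>" using hom_one[OF theta_hom Hm_group Hm_group] .
lemma theta_inj: "inj_on \<theta> (carrier H)" using theta_iso by (simp add: iso_iff)
lemma theta_surj: "\<theta> ` carrier H = carrier H" using theta_iso by (simp add: iso_iff)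

definition compatible :: "'a \<Rightarrow> 'c \<Rightarrow> bool" where
  "compatible g h \<longleftrightarrow> g \<in> carrier G \<and> h \<in> carrier F \<and> F.\<pi> h = \<theta> (G.\<pi> g)"

lemma compatible_pow:
  "compatible g h \<Longrightarrow> compatible (g [^]\<^bsub>G\<^esub> (k::nat)) (h [^]\<^bsub>F\<^esub> k)"
  unfolding compatible_def using F.pi_pow G.pi_pow theta_pow G.pi_closed by simp

lemma commutator_compatible:
  assumes a: "compatible a a'" and b: "compatible b b'"
  shows "commutator F a' b' = \<tau> (commutator G a b)"
proof -
  have ab: "a \<in> carrier G" "b \<in> carrier G" "a' \<in> carrier F" "b' \<in> carrier F"
    using a b by (auto simp: compatible_def)
  have "\<phi>F (commutator F a' b') = commutator_function F NF \<phi>F \<psi>F (F.\<pi> a') (F.\<pi> b')"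
    using F.commutator_function_eq ab by simp
  also have "\<dots> = \<sigma> (commutator_function G NG \<phi>G \<psi>G (G.\<pi> a) (G.\<pi> b))"
    using a b transports G.pi_closed ab by (simp add: compatible_def)
  also have "\<dots> = \<sigma> (\<phi>G (commutator G a b))" using G.commutator_function_eq ab by simp
  also have "\<dots> = \<phi>F (\<tau> (commutator G a b))" using phiF_tau G.commutator_in_N ab by simp
  finally have e: "\<phi>F (commutator F a' b') = \<phi>F (\<tau> (commutator G a b))" .
  have "commutator F a' b' \<in> NF" "\<tau> (commutator G a b) \<in> NF"
    using F.commutator_in_N tau_closed G.commutator_in_N ab by auto
  then show ?thesis using e F.phi_bij unfolding bij_betw_def by (meson inj_onD)
qed

subsection \<open>Partial isomorphisms\<close>

definition bottom_graph where "bottom_graph = {(x, \<tau> x) | x. x \<in> NG}"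

definition partial_iso :: "('a \<times> 'c) set \<Rightarrow> bool" where
  "partial_iso T \<longleftrightarrow> (\<forall>g h. (g, h) \<in> T \<longrightarrow> compatible g h) \<and> bottom_graph \<subseteq> T \<and>
   (\<forall>g1 h1 g2 h2. (g1, h1) \<in> T \<longrightarrow> (g2, h2) \<in> T \<longrightarrow> (g1 \<otimes>\<^bsub>G\<^esub> g2, h1 \<otimes>\<^bsub>F\<^esub> h2) \<in> T) \<and>
   (\<forall>g h. (g, h) \<in> T \<longrightarrow> (inv\<^bsub>G\<^esub> g, inv\<^bsub>F\<^esub> h) \<in> T) \<and>
   (\<forall>g h. (g, h) \<in> T \<longrightarrow> g \<in> NG \<longrightarrow> h = \<tau> g)"

definition covered :: "('a \<times> 'c) set \<Rightarrow> (nat \<Rightarrow> int) set" where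
  "covered T = G.\<pi> ` fst ` T"

lemma covered_I: "(g, h) \<in> T \<Longrightarrow> G.\<pi> g \<in> covered T"
  unfolding covered_def by (metis fst_conv imageI)
lemma covered_E: "y \<in> covered T \<Longrightarrow> \<exists>g h. (g, h) \<in> T \<and> y = G.\<pi> g"
  unfolding covered_def by force

context
  fixes T assumes T: "partial_iso T"
begin

lemma partial_iso_compatible: "(g, h) \<in> T \<Longrightarrow> compatible g h"
  using T unfolding partial_iso_def by blast
lemma partial_iso_carrier: "(g, h) \<in> T \<Longrightarrow> g \<in> carrier G \<and> h \<in> carrier F"
  using partial_iso_compatible by (simp add: compatible_def)
lemma partial_iso_graph: "x \<in> NG \<Longrightarrow> (x, \<tau> x) \<in> T"
  using T unfolding partial_iso_def bottom_graph_def by blast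
lemma partial_iso_mult: "(g1, h1) \<in> T \<Longrightarrow> (g2, h2) \<in> T \<Longrightarrow> (g1 \<otimes>\<^bsub>G\<^esub> g2, h1 \<otimes>\<^bsub>F\<^esub> h2) \<in> T"
  using T unfolding partial_iso_def by blast
lemma partial_iso_inv: "(g, h) \<in> T \<Longrightarrow> (inv\<^bsub>G\<^esub> g, inv\<^bsub>F\<^esub> h) \<in> T"
  using T unfolding partial_iso_def by blast
lemma partial_iso_bottom: "(g, h) \<in> T \<Longrightarrow> g \<in> NG \<Longrightarrow> h = \<tau> g"
  using T unfolding partial_iso_def by blast

lemma partial_iso_one: "(\<one>\<^bsub>G\<^esub>, \<one>\<^bsub>F\<^esub>) \<in> T"
  using partial_iso_graph[OF subgroup.one_closed[OF G.N_subgroup]] tau_one by simp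

lemma partial_iso_pow: "(g, h) \<in> T \<Longrightarrow> (g [^]\<^bsub>G\<^esub> (k::nat), h [^]\<^bsub>F\<^esub> k) \<in> T"
  by (induction k) (auto simp: partial_iso_one partial_iso_mult)

lemma covered_sub: "covered T \<subseteq> carrier H"
  using covered_E partial_iso_carrier G.pi_closed by blast

lemma covered_inv: "y \<in> covered T \<Longrightarrow> inv\<^bsub>H\<^esub> y \<in> covered T"
  using covered_E covered_I partial_iso_inv partial_iso_carrier G.pi_inv by metis

lemma covered_pow: "y \<in> covered T \<Longrightarrow> y [^]\<^bsub>H\<^esub> (k::nat) \<in> covered T"
  using covered_E covered_I partial_iso_pow partial_iso_carrier G.pi_pow by metis

text \<open>A compatible pair may be moved past T at the cost of a commutator, which is again
  recorded in T through the graph of \<tau>.\<close>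
lemma partial_iso_swap:
  assumes gh: "compatible g h" and ab: "(a, b) \<in> T"
  shows "\<exists>a' b'. (a', b') \<in> T \<and> g \<otimes>\<^bsub>G\<^esub> a = a' \<otimes>\<^bsub>G\<^esub> g \<and> h \<otimes>\<^bsub>F\<^esub> b = b' \<otimes>\<^bsub>F\<^esub> h"
proof -
  have a: "a \<in> carrier G" and b: "b \<in> carrier F" using partial_iso_carrier[OF ab] by auto
  have g: "g \<in> carrier G" and h: "h \<in> carrier F" using gh by (auto simp: compatible_def)
  define c where "c = commutator G g a"
  have cN: "c \<in> NG" unfolding c_def using G.commutator_in_N g a by blast
  have "commutator F h b = \<tau> c"
    unfolding c_def using commutator_compatible[OF gh partial_iso_compatible[OF ab]] .
  then have "h \<otimes>\<^bsub>F\<^esub> b = \<tau> c \<otimes>\<^bsub>F\<^esub> b \<otimes>\<^bsub>F\<^esub> h" using F.commutator_swap[OF h b] by simp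
  moreover have "g \<otimes>\<^bsub>G\<^esub> a = c \<otimes>\<^bsub>G\<^esub> a \<otimes>\<^bsub>G\<^esub> g" unfolding c_def using G.commutator_swap[OF g a] .
  moreover have "(c \<otimes>\<^bsub>G\<^esub> a, \<tau> c \<otimes>\<^bsub>F\<^esub> b) \<in> T" using partial_iso_mult[OF partial_iso_graph[OF cN] ab] .
  ultimately show ?thesis by blast
qed

end

lemma partial_iso_bottom_graph: "partial_iso bottom_graph"
  unfolding partial_iso_def
proof (intro conjI allI impI)
  fix g h assume "(g, h) \<in> bottom_graph"
  then have g: "g \<in> NG" and h: "h = \<tau> g" unfolding bottom_graph_def by auto
  have "F.\<pi> h = \<one>\<^bsub>H\<^esub>" using F.pi_kernel tau_closed[OF g] h F.N_sub by auto
  moreover have "G.\<pi> g = \<one>\<^bsub>H\<^esub>" using G.pi_kernel g G.N_sub by auto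
  ultimately show "compatible g h"
    using theta_one g h tau_closed G.N_sub F.N_sub by (auto simp: compatible_def)
next
  fix g1 h1 g2 h2 assume "(g1, h1) \<in> bottom_graph" "(g2, h2) \<in> bottom_graph"
  then show "(g1 \<otimes>\<^bsub>G\<^esub> g2, h1 \<otimes>\<^bsub>F\<^esub> h2) \<in> bottom_graph" unfolding bottom_graph_def
    using tau_mult subgroup.m_closed[OF G.N_subgroup] by auto
next
  fix g h assume "(g, h) \<in> bottom_graph"
  then show "(inv\<^bsub>G\<^esub> g, inv\<^bsub>F\<^esub> h) \<in> bottom_graph" unfolding bottom_graph_def
    using tau_inv subgroup.m_inv_closed[OF G.N_subgroup] by auto
qed (auto simp: bottom_graph_def)

definition adjoin :: "('a \<times> 'c) set \<Rightarrow> 'a \<Rightarrow> 'c \<Rightarrow> ('a \<times> 'c) set" where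
  "adjoin T g h = {(a \<otimes>\<^bsub>G\<^esub> g [^]\<^bsub>G\<^esub> k, b \<otimes>\<^bsub>F\<^esub> h [^]\<^bsub>F\<^esub> k) | a b (k::nat). (a, b) \<in> T}"

lemma adjoin_I: "(a, b) \<in> T \<Longrightarrow> (a \<otimes>\<^bsub>G\<^esub> g [^]\<^bsub>G\<^esub> (k::nat), b \<otimes>\<^bsub>F\<^esub> h [^]\<^bsub>F\<^esub> k) \<in> adjoin T g h"
  unfolding adjoin_def by blast

lemma adjoin_E:
  assumes "(g1, h1) \<in> adjoin T g h"
  obtains a b and k :: nat
  where "g1 = a \<otimes>\<^bsub>G\<^esub> g [^]\<^bsub>G\<^esub> k" "h1 = b \<otimes>\<^bsub>F\<^esub> h [^]\<^bsub>F\<^esub> k" "(a, b) \<in> T"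
  using assms unfolding adjoin_def by blast

text \<open>Throughout, T is a partial isomorphism and (g, h) a compatible pair; closure of
  adjoin T g h under products and inverses rests on moving powers of g past T.\<close>
context
  fixes T g h
  assumes T: "partial_iso T" and gh: "compatible g h"
begin

lemma g_carrier: "g \<in> carrier G" and h_carrier: "h \<in> carrier F"
  using gh by (auto simp: compatible_def)

lemma adjoin_mult:
  assumes s1: "(g1, h1) \<in> adjoin T g h" and s2: "(g2, h2) \<in> adjoin T g h"
  shows "(g1 \<otimes>\<^bsub>G\<^esub> g2, h1 \<otimes>\<^bsub>F\<^esub> h2) \<in> adjoin T g h"
proof -
  obtain a1 b1 and k :: nat where e1: "g1 = a1 \<otimes>\<^bsub>G\<^esub> g [^]\<^bsub>G\<^esub> k" "h1 = b1 \<otimes>\<^bsub>F\<^esub> h [^]\<^bsub>F\<^esub> k" "(a1, b1) \<in> T"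
    using adjoin_E[OF s1] by blast
  obtain a2 b2 and l :: nat where e2: "g2 = a2 \<otimes>\<^bsub>G\<^esub> g [^]\<^bsub>G\<^esub> l" "h2 = b2 \<otimes>\<^bsub>F\<^esub> h [^]\<^bsub>F\<^esub> l" "(a2, b2) \<in> T"
    using adjoin_E[OF s2] by blast
  obtain a' b' where sw: "(a', b') \<in> T" "g [^]\<^bsub>G\<^esub> k \<otimes>\<^bsub>G\<^esub> a2 = a' \<otimes>\<^bsub>G\<^esub> g [^]\<^bsub>G\<^esub> k"
      "h [^]\<^bsub>F\<^esub> k \<otimes>\<^bsub>F\<^esub> b2 = b' \<otimes>\<^bsub>F\<^esub> h [^]\<^bsub>F\<^esub> k"
    using partial_iso_swap[OF T compatible_pow[OF gh] e2(3)] by blast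
  have c: "a1 \<in> carrier G" "b1 \<in> carrier F" "a2 \<in> carrier G" "b2 \<in> carrier F"
          "a' \<in> carrier G" "b' \<in> carrier F"
    using partial_iso_carrier[OF T] e1(3) e2(3) sw(1) by auto
  have "g1 \<otimes>\<^bsub>G\<^esub> g2 = a1 \<otimes>\<^bsub>G\<^esub> (g [^]\<^bsub>G\<^esub> k \<otimes>\<^bsub>G\<^esub> a2) \<otimes>\<^bsub>G\<^esub> g [^]\<^bsub>G\<^esub> l"
    using e1 e2 c g_carrier by (simp add: G.m_assoc)
  also have "\<dots> = (a1 \<otimes>\<^bsub>G\<^esub> a') \<otimes>\<^bsub>G\<^esub> g [^]\<^bsub>G\<^esub> (k + l)"
    using sw(2) c g_carrier by (simp add: G.m_assoc G.nat_pow_mult[symmetric])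
  finally have eg: "g1 \<otimes>\<^bsub>G\<^esub> g2 = (a1 \<otimes>\<^bsub>G\<^esub> a') \<otimes>\<^bsub>G\<^esub> g [^]\<^bsub>G\<^esub> (k + l)" .
  have "h1 \<otimes>\<^bsub>F\<^esub> h2 = b1 \<otimes>\<^bsub>F\<^esub> (h [^]\<^bsub>F\<^esub> k \<otimes>\<^bsub>F\<^esub> b2) \<otimes>\<^bsub>F\<^esub> h [^]\<^bsub>F\<^esub> l"
    using e1 e2 c h_carrier by (simp add: F.m_assoc)
  also have "\<dots> = (b1 \<otimes>\<^bsub>F\<^esub> b') \<otimes>\<^bsub>F\<^esub> h [^]\<^bsub>F\<^esub> (k + l)"
    using sw(3) c h_carrier by (simp add: F.m_assoc F.nat_pow_mult[symmetric])
  finally have eh: "h1 \<otimes>\<^bsub>F\<^esub> h2 = (b1 \<otimes>\<^bsub>F\<^esub> b') \<otimes>\<^bsub>F\<^esub> h [^]\<^bsub>F\<^esub> (k + l)" .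
  show ?thesis unfolding eg eh using adjoin_I[OF partial_iso_mult[OF T e1(3) sw(1)]] .
qed

lemma adjoin_inv:
  assumes gp: "g [^]\<^bsub>G\<^esub> p = \<one>\<^bsub>G\<^esub>" and hp: "h [^]\<^bsub>F\<^esub> p = \<one>\<^bsub>F\<^esub>"
    and s1: "(g1, h1) \<in> adjoin T g h"
  shows "(inv\<^bsub>G\<^esub> g1, inv\<^bsub>F\<^esub> h1) \<in> adjoin T g h"
proof -
  obtain a1 b1 and k :: nat where e1: "g1 = a1 \<otimes>\<^bsub>G\<^esub> g [^]\<^bsub>G\<^esub> k" "h1 = b1 \<otimes>\<^bsub>F\<^esub> h [^]\<^bsub>F\<^esub> k" "(a1, b1) \<in> T"
    using adjoin_E[OF s1] by blast
  have c1: "a1 \<in> carrier G" "b1 \<in> carrier F" using partial_iso_carrier[OF T e1(3)] by auto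
  define q where "q = k * (p - 1)"
  obtain a' b' where sw: "(a', b') \<in> T" "g [^]\<^bsub>G\<^esub> q \<otimes>\<^bsub>G\<^esub> inv\<^bsub>G\<^esub> a1 = a' \<otimes>\<^bsub>G\<^esub> g [^]\<^bsub>G\<^esub> q"
      "h [^]\<^bsub>F\<^esub> q \<otimes>\<^bsub>F\<^esub> inv\<^bsub>F\<^esub> b1 = b' \<otimes>\<^bsub>F\<^esub> h [^]\<^bsub>F\<^esub> q"
    using partial_iso_swap[OF T compatible_pow[OF gh] partial_iso_inv[OF T e1(3)]] by blast
  have "inv\<^bsub>G\<^esub> g1 = g [^]\<^bsub>G\<^esub> q \<otimes>\<^bsub>G\<^esub> inv\<^bsub>G\<^esub> a1"
    using e1 c1 g_carrier G.inv_mult_group G.inv_pow_of_order_p[OF g_carrier gp G.p_pos]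
    unfolding q_def by simp
  moreover have "inv\<^bsub>F\<^esub> h1 = h [^]\<^bsub>F\<^esub> q \<otimes>\<^bsub>F\<^esub> inv\<^bsub>F\<^esub> b1"
    using e1 c1 h_carrier F.inv_mult_group F.inv_pow_of_order_p[OF h_carrier hp G.p_pos]
    unfolding q_def by simp
  ultimately show ?thesis using sw adjoin_I by simp
qed

lemma adjoin_compatible:
  assumes s1: "(g1, h1) \<in> adjoin T g h"
  shows "compatible g1 h1"
proof -
  obtain a1 b1 and k :: nat where e1: "g1 = a1 \<otimes>\<^bsub>G\<^esub> g [^]\<^bsub>G\<^esub> k" "h1 = b1 \<otimes>\<^bsub>F\<^esub> h [^]\<^bsub>F\<^esub> k" "(a1, b1) \<in> T"
    using adjoin_E[OF s1] by blast
  have ab: "compatible a1 b1" using partial_iso_compatible[OF T e1(3)] .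
  have ghk: "compatible (g [^]\<^bsub>G\<^esub> k) (h [^]\<^bsub>F\<^esub> k)" using compatible_pow[OF gh] .
  show ?thesis
    using ab ghk e1(1,2) G.pi_mult F.pi_mult theta_mult G.pi_closed
    by (simp add: compatible_def)
qed

text \<open>If the image x of g in H_m is not covered by T, then adjoining (g, h) creates no new
  pairs over the bottom: x^k covered forces p | k (as x is a power of x^k otherwise).\<close>
lemma adjoin_bottom:
  assumes gp: "g [^]\<^bsub>G\<^esub> p = \<one>\<^bsub>G\<^esub>" and hp: "h [^]\<^bsub>F\<^esub> p = \<one>\<^bsub>F\<^esub>"
    and new: "G.\<pi> g \<notin> covered T"
    and s1: "(g1, h1) \<in> adjoin T g h" and gN: "g1 \<in> NG"
  shows "h1 = \<tau> g1"
proof -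
  obtain a1 b1 and k :: nat where e1: "g1 = a1 \<otimes>\<^bsub>G\<^esub> g [^]\<^bsub>G\<^esub> k" "h1 = b1 \<otimes>\<^bsub>F\<^esub> h [^]\<^bsub>F\<^esub> k" "(a1, b1) \<in> T"
    using adjoin_E[OF s1] by blast
  have c1: "a1 \<in> carrier G" "b1 \<in> carrier F" using partial_iso_carrier[OF T e1(3)] by auto
  define x where "x = G.\<pi> g"
  have x: "x \<in> carrier H" unfolding x_def using G.pi_closed g_carrier .
  show ?thesis
  proof (cases "p dvd k")
    case True
    then obtain q where k: "k = p * q" by blast
    have "g [^]\<^bsub>G\<^esub> k = \<one>\<^bsub>G\<^esub>" using g_carrier gp k by (simp add: G.nat_pow_pow[symmetric])
    moreover have "h [^]\<^bsub>F\<^esub> k = \<one>\<^bsub>F\<^esub>" using h_carrier hp k by (simp add: F.nat_pow_pow[symmetric])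
    ultimately show ?thesis using e1 c1 gN partial_iso_bottom[OF T e1(3)] by simp
  next
    case False
    obtain a b where ab: "k * a = p * b + 1" using prime_not_dvd_bezout[OF G.prime_p False] by blast
    have "G.\<pi> g1 = \<one>\<^bsub>H\<^esub>" using G.pi_kernel gN G.N_sub by blast
    then have "G.\<pi> a1 \<otimes>\<^bsub>H\<^esub> x [^]\<^bsub>H\<^esub> k = \<one>\<^bsub>H\<^esub>"
      using e1 c1 g_carrier G.pi_mult G.pi_pow unfolding x_def by simp
    then have "x [^]\<^bsub>H\<^esub> k = inv\<^bsub>H\<^esub> G.\<pi> a1"
      using group.inv_equality[OF Hm_group] Hm_comm G.pi_closed c1 x
      by (metis group.inv_inv[OF Hm_group] group.inv_closed[OF Hm_group]
          monoid.nat_pow_closed[OF group.is_monoid[OF Hm_group]])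
    then have "(x [^]\<^bsub>H\<^esub> k) [^]\<^bsub>H\<^esub> a \<in> covered T"
      using covered_pow[OF T] covered_inv[OF T] covered_I[OF e1(3)] by simp
    moreover have "(x [^]\<^bsub>H\<^esub> k) [^]\<^bsub>H\<^esub> a = x"
      using group.pow_pow_of_order_p[OF Hm_group x Hm_pow_p[OF G.p_pos x] ab] .
    ultimately show ?thesis using new unfolding x_def by simp
  qed
qed

lemma partial_iso_adjoin:
  assumes gp: "g [^]\<^bsub>G\<^esub> p = \<one>\<^bsub>G\<^esub>" and hp: "h [^]\<^bsub>F\<^esub> p = \<one>\<^bsub>F\<^esub>"
    and new: "G.\<pi> g \<notin> covered T"
  shows "partial_iso (adjoin T g h)"
  unfolding partial_iso_def
proof (intro conjI allI impI)
  fix g1 h1 assume "(g1, h1) \<in> adjoin T g h"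
  then show "compatible g1 h1" by (rule adjoin_compatible)
next
  show "bottom_graph \<subseteq> adjoin T g h"
  proof
    fix z assume "z \<in> bottom_graph"
    then obtain a where ab: "z = (a, \<tau> a)" "(a, \<tau> a) \<in> T"
      using partial_iso_graph[OF T] unfolding bottom_graph_def by blast
    then show "z \<in> adjoin T g h"
      using adjoin_I[OF ab(2), of g 0 h] partial_iso_carrier[OF T ab(2)] by simp
  qed
next
  fix g1 h1 g2 h2 assume "(g1, h1) \<in> adjoin T g h" "(g2, h2) \<in> adjoin T g h"
  then show "(g1 \<otimes>\<^bsub>G\<^esub> g2, h1 \<otimes>\<^bsub>F\<^esub> h2) \<in> adjoin T g h" by (rule adjoin_mult)
next
  fix g1 h1 assume "(g1, h1) \<in> adjoin T g h"
  then show "(inv\<^bsub>G\<^esub> g1, inv\<^bsub>F\<^esub> h1) \<in> adjoin T g h" by (rule adjoin_inv[OF gp hp])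
next
  fix g1 h1 assume "(g1, h1) \<in> adjoin T g h" "g1 \<in> NG"
  then show "h1 = \<tau> g1" by (rule adjoin_bottom[OF gp hp new])
qed

lemma covered_adjoin: "insert (G.\<pi> g) (covered T) \<subseteq> covered (adjoin T g h)"
proof -
  have "(\<one>\<^bsub>G\<^esub> \<otimes>\<^bsub>G\<^esub> g [^]\<^bsub>G\<^esub> (1::nat), \<one>\<^bsub>F\<^esub> \<otimes>\<^bsub>F\<^esub> h [^]\<^bsub>F\<^esub> (1::nat)) \<in> adjoin T g h"
    using adjoin_I[OF partial_iso_one[OF T]] .
  then have "G.\<pi> g \<in> covered (adjoin T g h)" using covered_I g_carrier by fastforce
  moreover have "covered T \<subseteq> covered (adjoin T g h)"
  proof
    fix y assume "y \<in> covered T"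
    then obtain a b where ab: "(a, b) \<in> T" "y = G.\<pi> a" using covered_E by blast
    have "(a \<otimes>\<^bsub>G\<^esub> g [^]\<^bsub>G\<^esub> (0::nat), b \<otimes>\<^bsub>F\<^esub> h [^]\<^bsub>F\<^esub> (0::nat)) \<in> adjoin T g h"
      using adjoin_I[OF ab(1)] .
    then show "y \<in> covered (adjoin T g h)"
      using ab covered_I partial_iso_carrier[OF T ab(1)] by fastforce
  qed
  ultimately show ?thesis by blast
qed

end

lemma partial_iso_extend:
  assumes T: "partial_iso T" and x: "x \<in> carrier H" and new: "x \<notin> covered T"
  shows "\<exists>S. partial_iso S \<and> card (covered T) < card (covered S)"
proof -
  obtain g where g: "g \<in> carrier G" "G.\<pi> g = x" "g [^]\<^bsub>G\<^esub> p = \<one>\<^bsub>G\<^esub>"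
    using G.lift_of_order_p G.pi_surj x by (metis imageE)
  obtain h where h: "h \<in> carrier F" "F.\<pi> h = \<theta> x" "h [^]\<^bsub>F\<^esub> p = \<one>\<^bsub>F\<^esub>"
    using F.lift_of_order_p F.pi_surj theta_closed[OF x] by (metis imageE)
  have gh: "compatible g h" using g h by (simp add: compatible_def)
  let ?S = "adjoin T g h"
  have S: "partial_iso ?S" using partial_iso_adjoin[OF T gh] g h new by simp
  have "covered T \<subset> covered ?S" using covered_adjoin[OF T gh] g new by blast
  moreover have "finite (covered ?S)"
    using covered_sub[OF S] Hm_finite[OF G.p_pos] finite_subset by blast
  ultimately show ?thesis using S psubset_card_mono by blast
qed

text \<open>Since H_m is finite, a partial isomorphism with maximal covered part covers H_m.\<close>
lemma partial_iso_full: "\<exists>T. partial_iso T \<and> covered T = carrier H"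
proof -
  have bound: "\<forall>T. partial_iso T \<longrightarrow> card (covered T) < Suc (card (carrier H))"
    using covered_sub Hm_finite[OF G.p_pos] card_mono by (metis less_Suc_eq_le)
  obtain T where T: "partial_iso T" and max: "\<forall>S. partial_iso S \<longrightarrow> card (covered S) \<le> card (covered T)"
    using ex_has_greatest_nat[of partial_iso bottom_graph "\<lambda>T. card (covered T)",
        OF partial_iso_bottom_graph bound] by blast
  have "covered T = carrier H"
  proof (rule ccontr)
    assume "covered T \<noteq> carrier H"
    then obtain x where "x \<in> carrier H" "x \<notin> covered T" using covered_sub[OF T] by blast
    then show False using partial_iso_extend[OF T] max by (meson not_le)
  qed
  then show ?thesis using T by blast
qed

context
  fixes T assumes T: "partial_iso T" and full: "covered T = carrier H"
begin

lemma full_partial_iso_total: "g \<in> carrier G \<Longrightarrow> \<exists>h. (g, h) \<in> T"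
proof -
  assume g: "g \<in> carrier G"
  then obtain g' h' where gh: "(g', h') \<in> T" "G.\<pi> g = G.\<pi> g'"
    using full G.pi_closed covered_E by metis
  have g': "g' \<in> carrier G" using partial_iso_carrier[OF T gh(1)] by blast
  define u where "u = g \<otimes>\<^bsub>G\<^esub> inv\<^bsub>G\<^esub> g'"
  have "inv\<^bsub>G\<^esub> g' \<otimes>\<^bsub>G\<^esub> g \<in> NG" using G.pi_eq_iff g' g gh(2) by metis
  then have uN: "u \<in> NG" unfolding u_def using G.N_normal g g'
    by (metis G.inv_closed G.inv_inv G.m_assoc G.m_closed G.r_inv G.r_one normal.inv_op_closed2)
  have "(u \<otimes>\<^bsub>G\<^esub> g', \<tau> u \<otimes>\<^bsub>F\<^esub> h') \<in> T" using partial_iso_mult[OF T partial_iso_graph[OF T uN] gh(1)] .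
  moreover have "u \<otimes>\<^bsub>G\<^esub> g' = g" unfolding u_def using g g' by (simp add: G.m_assoc)
  ultimately show ?thesis by auto
qed

lemma full_partial_iso_onto: "h \<in> carrier F \<Longrightarrow> \<exists>g. (g, h) \<in> T"
proof -
  assume h: "h \<in> carrier F"
  obtain y where y: "y \<in> carrier H" "\<theta> y = F.\<pi> h"
    using theta_surj F.pi_closed[OF h] by (metis imageE)
  obtain g where g: "g \<in> carrier G" "G.\<pi> g = y" using G.pi_surj y by (metis imageE)
  obtain h' where gh': "(g, h') \<in> T" using full_partial_iso_total[OF g(1)] by blast
  have h': "h' \<in> carrier F" using partial_iso_carrier[OF T gh'] by blast
  have "F.\<pi> h' = F.\<pi> h" using partial_iso_compatible[OF T gh'] g y by (simp add: compatible_def)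
  then have "inv\<^bsub>F\<^esub> h' \<otimes>\<^bsub>F\<^esub> h \<in> NF" using F.pi_eq_iff[OF h' h] by simp
  then obtain u where u: "u \<in> NG" "\<tau> u = inv\<^bsub>F\<^esub> h' \<otimes>\<^bsub>F\<^esub> h"
    using bij_betw_imp_surj_on[OF tau_bij] by (metis imageE)
  have "(g \<otimes>\<^bsub>G\<^esub> u, h' \<otimes>\<^bsub>F\<^esub> \<tau> u) \<in> T"
    using partial_iso_mult[OF T gh' partial_iso_graph[OF T u(1)]] .
  moreover have "h' \<otimes>\<^bsub>F\<^esub> \<tau> u = h" using u h h' by (simp add: F.m_assoc[symmetric])
  ultimately show ?thesis by auto
qed

end

text \<open>A partial isomorphism is the graph of a map: over 1 it only contains (1, 1).\<close>
lemma partial_iso_functional: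
  assumes T: "partial_iso T" and "(g, h) \<in> T" "(g, h') \<in> T"
  shows "h = h'"
proof -
  have c: "g \<in> carrier G" "h \<in> carrier F" "h' \<in> carrier F"
    using partial_iso_carrier[OF T] assms by auto
  have "(g \<otimes>\<^bsub>G\<^esub> inv\<^bsub>G\<^esub> g, h \<otimes>\<^bsub>F\<^esub> inv\<^bsub>F\<^esub> h') \<in> T"
    using partial_iso_mult[OF T assms(2) partial_iso_inv[OF T assms(3)]] .
  then have "(\<one>\<^bsub>G\<^esub>, h \<otimes>\<^bsub>F\<^esub> inv\<^bsub>F\<^esub> h') \<in> T" using c by simp
  then have "h \<otimes>\<^bsub>F\<^esub> inv\<^bsub>F\<^esub> h' = \<tau> \<one>\<^bsub>G\<^esub>"
    using partial_iso_bottom[OF T] subgroup.one_closed[OF G.N_subgroup] by blast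
  then have "h \<otimes>\<^bsub>F\<^esub> inv\<^bsub>F\<^esub> h' = \<one>\<^bsub>F\<^esub>" using tau_one by simp
  then show ?thesis using c F.inv_solve_right' by (metis F.l_one F.one_closed)
qed

text \<open>... and that map is injective, because \<theta> and \<tau> are.\<close>
lemma partial_iso_injective:
  assumes T: "partial_iso T" and "(a, h) \<in> T" "(b, h) \<in> T"
  shows "a = b"
proof -
  have c: "a \<in> carrier G" "b \<in> carrier G" "h \<in> carrier F"
    using partial_iso_carrier[OF T] assms by auto
  have ab: "(a \<otimes>\<^bsub>G\<^esub> inv\<^bsub>G\<^esub> b, \<one>\<^bsub>F\<^esub>) \<in> T"
    using partial_iso_mult[OF T assms(2) partial_iso_inv[OF T assms(3)]] c by simp
  have abc: "a \<otimes>\<^bsub>G\<^esub> inv\<^bsub>G\<^esub> b \<in> carrier G" using c by simp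
  have "\<theta> (G.\<pi> (a \<otimes>\<^bsub>G\<^esub> inv\<^bsub>G\<^esub> b)) = \<theta> \<one>\<^bsub>H\<^esub>"
    using partial_iso_compatible[OF T ab] F.pi_one theta_one by (simp add: compatible_def)
  then have "G.\<pi> (a \<otimes>\<^bsub>G\<^esub> inv\<^bsub>G\<^esub> b) = \<one>\<^bsub>H\<^esub>"
    using theta_inj G.pi_closed[OF abc] monoid.one_closed[OF group.is_monoid[OF Hm_group]] inj_onD
    by metis
  then have N: "a \<otimes>\<^bsub>G\<^esub> inv\<^bsub>G\<^esub> b \<in> NG" using G.pi_kernel abc by blast
  then have "\<tau> (a \<otimes>\<^bsub>G\<^esub> inv\<^bsub>G\<^esub> b) = \<tau> \<one>\<^bsub>G\<^esub>" using partial_iso_bottom[OF T ab] tau_one by simp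
  then have "a \<otimes>\<^bsub>G\<^esub> inv\<^bsub>G\<^esub> b = \<one>\<^bsub>G\<^esub>"
    using tau_bij N subgroup.one_closed[OF G.N_subgroup] unfolding bij_betw_def by (meson inj_onD)
  then show "a = b" using c G.inv_solve_right' by (metis G.l_one G.one_closed)
qed

theorem isomorphic: "G \<cong> F"
proof -
  obtain T where T: "partial_iso T" and full: "covered T = carrier H" using partial_iso_full by blast
  define \<Phi> where "\<Phi> g = (THE h. (g, h) \<in> T)" for g
  have unique: "\<exists>!h. (g, h) \<in> T" if "g \<in> carrier G" for g
    using full_partial_iso_total[OF T full that] partial_iso_functional[OF T] by blast
  have Phi_eq: "\<Phi> g = h" if "(g, h) \<in> T" for g h
    unfolding \<Phi>_def using the1_equality[OF unique that] partial_iso_carrier[OF T that] by blast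
  have Phi: "(g, \<Phi> g) \<in> T" if "g \<in> carrier G" for g
    using full_partial_iso_total[OF T full that] Phi_eq by blast
  have Phi_closed: "\<Phi> g \<in> carrier F" if "g \<in> carrier G" for g
    using partial_iso_carrier[OF T Phi[OF that]] by blast
  have "\<Phi> \<in> hom G F"
  proof (rule homI)
    fix a b assume "a \<in> carrier G" "b \<in> carrier G"
    then show "\<Phi> (a \<otimes>\<^bsub>G\<^esub> b) = \<Phi> a \<otimes>\<^bsub>F\<^esub> \<Phi> b"
      using Phi_eq[OF partial_iso_mult[OF T Phi Phi]] by blast
  qed (rule Phi_closed)
  moreover have "inj_on \<Phi> (carrier G)"
  proof (rule inj_onI)
    fix a b assume "a \<in> carrier G" "b \<in> carrier G" "\<Phi> a = \<Phi> b"
    then show "a = b" using Phi partial_iso_injective[OF T] by metis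
  qed
  moreover have "carrier F \<subseteq> \<Phi> ` carrier G"
  proof
    fix h assume "h \<in> carrier F"
    then obtain g where "(g, h) \<in> T" using full_partial_iso_onto[OF T full] by blast
    then show "h \<in> \<Phi> ` carrier G" using Phi_eq partial_iso_carrier[OF T] by (metis imageI)
  qed
  ultimately have "\<Phi> \<in> iso G F" using Phi_closed by (auto simp: iso_iff)
  then show ?thesis by (rule is_isoI)
qed

end

lemma (in chernikov_iso) equivalent: "equivalent_commutator_functions p n m G NG \<phi>G \<psi>G F NF \<phi>F \<psi>F"
  unfolding equivalent_commutator_functions_def
  using sigma_iso theta_iso transports_commutator_function by blast

theorem theorem1p2:
  fixes G :: "('a, 'b) monoid_scheme" and F :: "('c, 'd) monoid_scheme"
    and p n m :: nat
    and NG :: "'a set" and \<phi>G :: "'a \<Rightarrow> nat \<Rightarrow> rat" and \<psi>G :: "'a set \<Rightarrow> nat \<Rightarrow> int"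
    and NF :: "'c set" and \<phi>F :: "'c \<Rightarrow> nat \<Rightarrow> rat" and \<psi>F :: "'c set \<Rightarrow> nat \<Rightarrow> int"
  assumes "Factorial_Ring.prime p"
    and "nilpotent_chernikov G p n m NG \<phi>G \<psi>G"
    and "nilpotent_chernikov F p n m NF \<phi>F \<psi>F"
  shows "G \<cong> F \<longleftrightarrow>
    (\<exists>\<sigma> \<theta>. \<sigma> \<in> iso (Mn p n) (Mn p n) \<and> \<theta> \<in> iso (Hm p m) (Hm p m) \<and>
       (\<forall>x\<in>carrier (Hm p m). \<forall>y\<in>carrier (Hm p m).
          commutator_function F NF \<phi>F \<psi>F (\<theta> x) (\<theta> y) =
          \<sigma> (commutator_function G NG \<phi>G \<psi>G x y)))"
proof -
  have "equivalent_commutator_functions p n m G NG \<phi>G \<psi>G F NF \<phi>F \<psi>F" if "G \<cong> F"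
  proof -
    obtain \<Phi> where "\<Phi> \<in> iso G F" using \<open>G \<cong> F\<close> unfolding is_iso_def by blast
    then interpret chernikov_iso G F p n m NG \<phi>G \<psi>G NF \<phi>F \<psi>F \<Phi>
      using assms by (simp add: chernikov_iso_def chernikov_def chernikov_iso_axioms_def)
    show ?thesis by (rule equivalent)
  qed
  moreover have "G \<cong> F" if "equivalent_commutator_functions p n m G NG \<phi>G \<psi>G F NF \<phi>F \<psi>F"
  proof -
    have "\<exists>\<sigma> \<theta>. chernikov_transport G F p n m NG \<phi>G \<psi>G NF \<phi>F \<psi>F \<sigma> \<theta>"
      using that assms unfolding equivalent_commutator_functions_def chernikov_transport_def
        chernikov_transport_axioms_def chernikov_def by blast
    then obtain \<sigma> \<theta> where "chernikov_transport G F p n m NG \<phi>G \<psi>G NF \<phi>F \<psi>F \<sigma> \<theta>" by blast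
    then show ?thesis by (rule chernikov_transport.isomorphic)
  qed
  ultimately show ?thesis unfolding equivalent_commutator_functions_def by blast
qed

end
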